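(* Let $S_1 = A_3^*$ be the set of nonnegative integers whose base-$3$ expansion contains no digit $2$, and for $n\ge 2$ let $S_n$ be the set of positive integers $k$ such that every exponent in the prime factorization of $k$ (i.e. $v_p(k)$ for each prime $p\mid k$) lies in $S_{n-1}$. Then the asymptotic density $d(S_n)$ tends to $1$ as $n\to\infty$, but there is no $n$ for which $d(S_n)=1$.
   Context: Thus $S_2$ is the greedy geometric-progression-free set $G_3^*$ (Rankin's characterization). The asymptotic density of $A\subseteq\mathbb{N}$ is $d(A)=\lim_{N\to\infty}\frac{|A\cap\{1,\dots,N\}|}{N}$. *)

theory Defs
  imports Complex_Main "HOL-Computational_Algebra.Primes"
begin

definition A3 :: "nat set" where
  "A3 = {k. \<forall>i::nat. (k div 3 ^ i) mod 3 \<noteq> 2}"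

text \<open>S 1 = A_3^*; S (n+1) = positive k all of whose prime exponents lie in S n.
  The index 0 is unused (set to the empty set).\<close>
fun S :: "nat \<Rightarrow> nat set" where
  "S 0 = {}"
| "S (Suc 0) = A3"
| "S (Suc (Suc n)) =
     {k. k > 0 \<and> (\<forall>p \<in> prime_factors k. multiplicity p k \<in> S (Suc n))}"

definition has_density :: "nat set \<Rightarrow> real \<Rightarrow> bool" where
  "has_density A d \<longleftrightarrow>
     (\<lambda>N. real (card (A \<inter> {1..N})) / real N) \<longlonglongrightarrow> d"

end

theory Submission
  imports Defs
begin

text \<open>
  \<open>S 1 = A3\<close> has density 0, since \<open>A3\<close> has only \<open>2^j\<close> elements below \<open>3^j\<close>.
  For \<open>n \<ge> 2\<close>, \<open>S n\<close> is the set of integers all of whose prime exponents lie in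
  \<open>E = S (n - 1)\<close>, which contains \<open>1\<close>. Such a set has a density: imposing the condition only
  on primes \<open>p \<le> m\<close> and exponents \<open>\<le> m\<close> gives a periodic set, which differs from it only on
  integers divisible by \<open>d^2\<close> with \<open>d > m\<close> or by \<open>d^(m+1)\<close> with \<open>d > 1\<close>, and these have
  upper density \<open>O(1/m)\<close>. Since \<open>{1..n-2} \<subseteq> E\<close>, every integer that is not divisible by an
  \<open>(n-1)\<close>-st power lies in \<open>S n\<close>, whence \<open>d(S n) \<ge> 1 - 2^(2-n)\<close>. On the other hand \<open>E\<close> misses
  some \<open>e \<ge> 1\<close> (\<open>2 \<notin> S 1\<close>, and \<open>e \<notin> S n\<close> implies \<open>2^e \<notin> S (n+1)\<close>), and the integers of
  2-adic valuation exactly \<open>e\<close> avoid \<open>S n\<close>, so \<open>d(S n) \<le> 1 - 2^(-e-1)\<close>.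
\<close>

lemma card_multiples_atLeastAtMost:
  fixes c N :: nat
  assumes "c > 0"
  shows "card {k\<in>{1..N}. c dvd k} = N div c"
proof -
  have "{k\<in>{1..N}. c dvd k} = (\<lambda>i. c * i) ` {1..N div c}"
  proof (intro set_eqI iffI)
    fix k assume "k \<in> {k\<in>{1..N}. c dvd k}"
    then obtain i where k: "k = c * i" "1 \<le> c * i" "c * i \<le> N" by auto
    then have "1 \<le> i" "i \<le> N div c"
      using assms by (auto simp: less_eq_div_iff_mult_less_eq mult.commute intro: Suc_leI)
    with k show "k \<in> (\<lambda>i. c * i) ` {1..N div c}" by auto
  next
    fix k assume "k \<in> (\<lambda>i. c * i) ` {1..N div c}"
    then obtain i where i: "i \<in> {1..N div c}" "k = c * i" by blast
    then have "c * i \<le> c * (N div c)" by simp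
    also have "\<dots> \<le> N" by simp
    finally show "k \<in> {k\<in>{1..N}. c dvd k}" using i assms by auto
  qed
  moreover have "inj_on (\<lambda>i. c * i) {1..N div c}"
    using assms by (auto simp: inj_on_def)
  ultimately show ?thesis by (simp add: card_image)
qed

lemma card_multiples_atLeastAtMost_le:
  fixes c N :: nat
  assumes "c > 0"
  shows "real (card {k\<in>{1..N}. c dvd k}) \<le> real N / real c"
  unfolding card_multiples_atLeastAtMost[OF assms] by (rule of_nat_div_le_of_nat)

lemma sum_inverse_squares_tail_le:
  assumes "a \<ge> 1"
  shows "(\<Sum>d=a+1..N. 1 / (real d)^2) \<le> 1 / real a"
proof -
  have "(\<Sum>d=a+1..N. 1 / (real d)^2) \<le> (\<Sum>d=a+1..N. 1 / real (d - 1) - 1 / real d)"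
  proof (rule sum_mono)
    fix d assume d: "d \<in> {a+1..N}"
    then have "real (d - 1) = real d - 1" "real d - 1 \<ge> 1" using assms by auto
    then show "1 / (real d)^2 \<le> 1 / real (d - 1) - 1 / real d"
      by (simp add: field_simps power2_eq_square)
  qed
  also have "\<dots> \<le> 1 / real a"
  proof (cases "a \<le> N")
    case True
    have "(\<Sum>d=a+1..N. 1 / real (d - 1) - 1 / real d) = 1 / real a - 1 / real N"
      using True by (induction N rule: dec_induct) (auto simp: atLeastAtMostSuc_conv)
    then show ?thesis by simp
  qed simp
  finally show ?thesis .
qed

lemma card_multiples_of_large_power_le:
  fixes a j N :: nat
  assumes "a \<ge> 1" "j \<ge> 2"
  shows "real (card {k\<in>{1..N}. \<exists>d>a. d ^ j dvd k}) \<le> real N / (2 ^ (j - 2) * real a)"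
proof -
  have "{k\<in>{1..N}. \<exists>d>a. d ^ j dvd k} \<subseteq> (\<Union>d\<in>{a+1..N}. {k\<in>{1..N}. d ^ j dvd k})"
  proof
    fix k assume "k \<in> {k\<in>{1..N}. \<exists>d>a. d ^ j dvd k}"
    then obtain d where k: "1 \<le> k" "k \<le> N" "d > a" "d ^ j dvd k" by auto
    have "d \<le> d ^ j" using k assms by (simp add: self_le_power)
    also have "\<dots> \<le> k" using k by (simp add: dvd_imp_le)
    finally show "k \<in> (\<Union>d\<in>{a+1..N}. {k\<in>{1..N}. d ^ j dvd k})" using k by auto
  qed
  then have "card {k\<in>{1..N}. \<exists>d>a. d ^ j dvd k} \<le> card (\<Union>d\<in>{a+1..N}. {k\<in>{1..N}. d ^ j dvd k})"
    by (intro card_mono) auto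
  also have "\<dots> \<le> (\<Sum>d=a+1..N. card {k\<in>{1..N}. d ^ j dvd k})"
    by (rule card_UN_le) simp
  finally have "real (card {k\<in>{1..N}. \<exists>d>a. d ^ j dvd k})
      \<le> (\<Sum>d=a+1..N. real (card {k\<in>{1..N}. d ^ j dvd k}))"
    by (simp flip: of_nat_sum)
  also have "\<dots> \<le> (\<Sum>d=a+1..N. real N / 2 ^ (j - 2) * (1 / (real d)^2))"
  proof (rule sum_mono)
    fix d assume "d \<in> {a+1..N}"
    then have d: "real d \<ge> 2" using assms by auto
    have "2 ^ (j - 2) * (real d)^2 \<le> (real d) ^ (j - 2) * (real d)^2"
      using d by (intro mult_right_mono power_mono) auto
    also have "\<dots> = real d ^ ((j - 2) + 2)" by (simp only: power_add)
    also have "\<dots> = real (d ^ j)"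
      by (simp only: le_add_diff_inverse2[OF assms(2)] of_nat_power)
    finally have "real N / real (d ^ j) \<le> real N / (2 ^ (j - 2) * (real d)^2)"
      using d by (intro divide_left_mono) auto
    with card_multiples_atLeastAtMost_le[of "d ^ j" N] d
    show "real (card {k\<in>{1..N}. d ^ j dvd k}) \<le> real N / 2 ^ (j - 2) * (1 / (real d)^2)"
      by simp
  qed
  also have "\<dots> = real N / 2 ^ (j - 2) * (\<Sum>d=a+1..N. 1 / (real d)^2)"
    by (simp add: sum_distrib_left)
  also have "\<dots> \<le> real N / 2 ^ (j - 2) * (1 / real a)"
    by (intro mult_left_mono sum_inverse_squares_tail_le assms) auto
  finally show ?thesis by simp
qed

definition density_ratio :: "nat set \<Rightarrow> nat \<Rightarrow> real" where
  "density_ratio A N = real (card (A \<inter> {1..N})) / real N"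

lemma has_density_iff_density_ratio: "has_density A d \<longleftrightarrow> density_ratio A \<longlonglongrightarrow> d"
  unfolding has_density_def density_ratio_def ..

lemma density_ratio_le_1: "density_ratio A N \<le> 1"
proof -
  have "card (A \<inter> {1..N}) \<le> card {1..N}" by (intro card_mono) auto
  then show ?thesis unfolding density_ratio_def by (cases "N = 0") (auto simp: divide_le_eq)
qed

lemma has_density_if_bounded_deviation:
  assumes "\<And>N. \<bar>real (card (A \<inter> {1..N})) - d * real N\<bar> \<le> C"
  shows "has_density A d"
proof -
  have "(\<lambda>N. density_ratio A N - d) \<longlonglongrightarrow> 0"
  proof (rule tendsto_0_le[OF lim_const_over_n[of 1]], rule eventually_sequentiallyI)
    fix N :: nat assume "N \<ge> 1"
    then have "density_ratio A N - d = (real (card (A \<inter> {1..N})) - d * real N) / real N"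
      by (simp add: density_ratio_def field_simps)
    with assms[of N] show "norm (density_ratio A N - d) \<le> norm (1 / real N) * C"
      by (simp add: abs_divide divide_right_mono)
  qed
  then show ?thesis
    unfolding has_density_iff_density_ratio by (rule LIM_zero_cancel)
qed

lemma card_periodic_atLeastAtMost_mult:
  assumes periodic: "\<And>k. k \<ge> 1 \<Longrightarrow> k \<in> T \<longleftrightarrow> k + Q \<in> T"
  shows "card (T \<inter> {1..q * Q}) = q * card (T \<inter> {1..Q})"
proof (induction q)
  case (Suc q)
  have shift: "k \<in> T \<longleftrightarrow> k + q * Q \<in> T" if "k \<ge> 1" for k
  proof (induction q)
    case (Suc q)
    then show ?case using periodic[of "k + q * Q"] that by (simp add: algebra_simps)
  qed simp
  have "T \<inter> {q*Q+1..q*Q+Q} = (\<lambda>k. k + q * Q) ` (T \<inter> {1..Q})"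
  proof (intro set_eqI iffI)
    fix x assume x: "x \<in> T \<inter> {q*Q+1..q*Q+Q}"
    then have "x - q * Q \<ge> 1" by auto
    with x have "x - q * Q \<in> T \<inter> {1..Q}" using shift[of "x - q * Q"] by auto
    with x show "x \<in> (\<lambda>k. k + q * Q) ` (T \<inter> {1..Q})"
      by (intro image_eqI[of _ _ "x - q * Q"]) auto
  next
    fix x assume "x \<in> (\<lambda>k. k + q * Q) ` (T \<inter> {1..Q})"
    then obtain k where "x = k + q * Q" "k \<in> T" "1 \<le> k" "k \<le> Q" by auto
    then show "x \<in> T \<inter> {q*Q+1..q*Q+Q}" using shift[of k] by auto
  qed
  then have "card (T \<inter> {q*Q+1..q*Q+Q}) = card (T \<inter> {1..Q})"
    by (simp add: card_image)
  moreover have "T \<inter> {1..Suc q * Q} = (T \<inter> {1..q*Q}) \<union> (T \<inter> {q*Q+1..q*Q+Q})"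
    by auto
  moreover have "card ((T \<inter> {1..q*Q}) \<union> (T \<inter> {q*Q+1..q*Q+Q}))
      = card (T \<inter> {1..q*Q}) + card (T \<inter> {q*Q+1..q*Q+Q})"
    by (rule card_Un_disjoint) auto
  ultimately show ?case using Suc.IH by simp
qed simp

lemma periodic_has_density:
  assumes "Q > 0" and periodic: "\<And>k. k \<ge> 1 \<Longrightarrow> k \<in> T \<longleftrightarrow> k + Q \<in> T"
  shows "has_density T (real (card (T \<inter> {1..Q})) / real Q)"
proof (rule has_density_if_bounded_deviation)
  fix N :: nat
  define c where "c = card (T \<inter> {1..Q})"
  define q where "q = N div Q"
  have count_mono: "card (T \<inter> {1..M}) \<le> card (T \<inter> {1..M'})" if "M \<le> M'" for M M'
    using that by (intro card_mono) auto
  have "q * Q \<le> N" "N \<le> Suc q * Q"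
    using \<open>Q > 0\<close> by (auto simp: q_def dividend_less_div_times less_imp_le)
  then have "q * c \<le> card (T \<inter> {1..N})" "card (T \<inter> {1..N}) \<le> Suc q * c"
    using count_mono[of "q * Q" N] count_mono[of N "Suc q * Q"]
      card_periodic_atLeastAtMost_mult[OF periodic, of q]
      card_periodic_atLeastAtMost_mult[OF periodic, of "Suc q"]
    unfolding c_def by simp_all
  then have lower: "real q * real c \<le> real (card (T \<inter> {1..N}))"
    and upper: "real (card (T \<inter> {1..N})) \<le> real q * real c + real c"
    by (simp_all flip: of_nat_mult of_nat_add)
  have "real (q * Q) \<le> real N" "real N \<le> real (Suc q * Q)"
    using \<open>q * Q \<le> N\<close> \<open>N \<le> Suc q * Q\<close> by (simp_all only: of_nat_le_iff)
  then have "real q * real Q \<le> real N" "real N \<le> (real q + 1) * real Q"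
    by (simp_all add: algebra_simps)
  then have "real q \<le> real N / real Q" "real N / real Q \<le> real q + 1"
    using \<open>Q > 0\<close> by (simp_all add: pos_le_divide_eq pos_divide_le_eq)
  then have "real q * real c \<le> real N / real Q * real c"
    "real N / real Q * real c \<le> (real q + 1) * real c"
    by (intro mult_right_mono; simp)+
  with lower upper
  show "\<bar>real (card (T \<inter> {1..N})) - real c / real Q * real N\<bar> \<le> real c"
    by (simp add: abs_le_iff algebra_simps)
qed

lemma convergent_density_ratio_approx:
  assumes "\<And>e. e > 0 \<Longrightarrow>
    \<exists>T. convergent (density_ratio T) \<and> (\<forall>N. \<bar>density_ratio A N - density_ratio T N\<bar> \<le> e)"
  shows "convergent (density_ratio A)"
proof (rule Cauchy_convergent, rule metric_CauchyI)
  fix e :: real assume "e > 0"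
  then obtain T where T: "convergent (density_ratio T)"
    and close: "\<And>N. \<bar>density_ratio A N - density_ratio T N\<bar> \<le> e / 4"
    using assms[of "e / 4"] by auto
  obtain M where M: "\<And>m n. m \<ge> M \<Longrightarrow> n \<ge> M \<Longrightarrow> dist (density_ratio T m) (density_ratio T n) < e / 4"
    using metric_CauchyD[OF convergent_Cauchy[OF T], of "e / 4"] \<open>e > 0\<close> by auto
  have "dist (density_ratio A m) (density_ratio A n) < e" if "m \<ge> M" "n \<ge> M" for m n
    using M[OF that] close[of m] close[of n] \<open>e > 0\<close> unfolding dist_real_def by linarith
  then show "\<exists>M. \<forall>m\<ge>M. \<forall>n\<ge>M. dist (density_ratio A m) (density_ratio A n) < e" by blast
qed

definition exponents_in :: "nat set \<Rightarrow> nat set" where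
  "exponents_in E = {k. k > 0 \<and> (\<forall>p\<in>prime_factors k. multiplicity p k \<in> E)}"

text \<open>Membership depends only on the residue of \<open>k\<close> modulo \<open>(m!)^(m+1)\<close>.\<close>
definition exponents_in_upto :: "nat set \<Rightarrow> nat \<Rightarrow> nat set" where
  "exponents_in_upto E m =
     {k. k > 0 \<and> (\<forall>p. prime p \<longrightarrow> p \<le> m \<longrightarrow> multiplicity p k \<in> {1..m} \<longrightarrow> multiplicity p k \<in> E)}"

lemma S_Suc: "n \<ge> 1 \<Longrightarrow> S (Suc n) = exponents_in (S n)"
  by (cases n) (simp_all add: exponents_in_def)

lemma mem_exponents_in_iff:
  "k \<in> exponents_in E \<longleftrightarrow> k > 0 \<and> (\<forall>p. prime p \<longrightarrow> multiplicity p k \<ge> 1 \<longrightarrow> multiplicity p k \<in> E)"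
  by (auto simp: exponents_in_def in_prime_factors_iff prime_multiplicity_gt_zero_iff Suc_le_eq)

lemma multiplicity_eq_iff_exact_power_dvd:
  fixes p k :: nat
  assumes "prime p" "k > 0"
  shows "multiplicity p k = e \<longleftrightarrow> p ^ e dvd k \<and> \<not> p ^ Suc e dvd k"
  using assms prime_gt_1_nat[OF assms(1)]
    power_dvd_iff_le_multiplicity[of k p e] power_dvd_iff_le_multiplicity[of k p "Suc e"]
  by auto

lemma multiplicity_add_multiple_eq_iff:
  fixes p k Q :: nat
  assumes "prime p" "k > 0" "p ^ Suc e dvd Q"
  shows "multiplicity p (k + Q) = e \<longleftrightarrow> multiplicity p k = e"
proof -
  have "p ^ e dvd Q" using assms(3) by (rule dvd_trans[rotated]) (simp add: le_imp_power_dvd)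
  then show ?thesis
    using assms by (simp add: multiplicity_eq_iff_exact_power_dvd dvd_add_left_iff)
qed

lemma exponents_in_upto_periodic:
  fixes k m :: nat
  assumes "k \<ge> 1"
  shows "k \<in> exponents_in_upto E m \<longleftrightarrow> k + fact m ^ Suc m \<in> exponents_in_upto E m"
proof -
  let ?Q = "fact m ^ Suc m :: nat"
  have eq: "multiplicity p (k + ?Q) = e \<longleftrightarrow> multiplicity p k = e"
    if "prime p" "p \<le> m" "e \<le> m" for p e
  proof (rule multiplicity_add_multiple_eq_iff)
    have "p ^ Suc e dvd p ^ Suc m" using that(3) by (intro le_imp_power_dvd) simp
    also have "p dvd fact m" using that prime_ge_1_nat[of p] by (intro dvd_fact) auto
    then have "p ^ Suc m dvd fact m ^ Suc m" by (rule dvd_power_same)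
    finally show "p ^ Suc e dvd ?Q" .
  qed (use that assms in auto)
  have same: "multiplicity p (k + ?Q) = multiplicity p k"
    if "prime p" "p \<le> m" "multiplicity p k \<le> m \<or> multiplicity p (k + ?Q) \<le> m" for p
    using that(3) eq[OF that(1,2), of "multiplicity p k"] eq[OF that(1,2), of "multiplicity p (k + ?Q)"]
    by (auto simp del: power_Suc)
  have iff: "(prime p \<longrightarrow> p \<le> m \<longrightarrow>
               multiplicity p (k + ?Q) \<in> {1..m} \<longrightarrow> multiplicity p (k + ?Q) \<in> E) \<longleftrightarrow>
             (prime p \<longrightarrow> p \<le> m \<longrightarrow> multiplicity p k \<in> {1..m} \<longrightarrow> multiplicity p k \<in> E)" for p
    using same[of p] by (cases "multiplicity p k \<le> m \<or> multiplicity p (k + ?Q) \<le> m") auto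
  show ?thesis
    unfolding exponents_in_upto_def mem_Collect_eq iff using assms by simp
qed

lemma exponents_in_subset_upto: "exponents_in E \<subseteq> exponents_in_upto E m"
  by (auto simp: mem_exponents_in_iff exponents_in_upto_def)

lemma exponents_in_upto_diff_subset:
  assumes "1 \<in> E"
  shows "exponents_in_upto E m - exponents_in E \<subseteq> {k. \<exists>d>m. d^2 dvd k} \<union> {k. \<exists>d>1. d ^ Suc m dvd k}"
proof
  fix k assume k: "k \<in> exponents_in_upto E m - exponents_in E"
  then obtain p where p: "prime p" "multiplicity p k \<ge> 1" "multiplicity p k \<notin> E"
    by (auto simp: mem_exponents_in_iff exponents_in_upto_def)
  define u where "u = multiplicity p k"
  have "u \<ge> 2" using p assms unfolding u_def by (cases "multiplicity p k = 1") auto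
  have "p ^ u dvd k" unfolding u_def by (rule multiplicity_dvd)
  have "p > m \<or> u > m" using k p unfolding u_def exponents_in_upto_def by auto
  then show "k \<in> {k. \<exists>d>m. d^2 dvd k} \<union> {k. \<exists>d>1. d ^ Suc m dvd k}"
  proof
    assume "p > m"
    have "p^2 dvd p ^ u" using \<open>u \<ge> 2\<close> by (rule le_imp_power_dvd)
    with \<open>p ^ u dvd k\<close> \<open>p > m\<close> show ?thesis by (auto intro: dvd_trans)
  next
    assume "u > m"
    then have "p ^ Suc m dvd p ^ u" by (intro le_imp_power_dvd) auto
    with \<open>p ^ u dvd k\<close> prime_gt_1_nat[OF \<open>prime p\<close>] show ?thesis by (auto intro: dvd_trans)
  qed
qed

lemma card_exponents_in_upto_diff_le:
  assumes "1 \<in> E" "m \<ge> 1"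
  shows "real (card ((exponents_in_upto E m - exponents_in E) \<inter> {1..N})) \<le> 2 * real N / real m"
proof -
  let ?I = "{1..N}"
  have "(exponents_in_upto E m - exponents_in E) \<inter> ?I
      \<subseteq> {k\<in>?I. \<exists>d>m. d^2 dvd k} \<union> {k\<in>?I. \<exists>d>1. d ^ Suc m dvd k}"
    using exponents_in_upto_diff_subset[OF assms(1)] by auto
  then have "card ((exponents_in_upto E m - exponents_in E) \<inter> ?I)
      \<le> card ({k\<in>?I. \<exists>d>m. d^2 dvd k} \<union> {k\<in>?I. \<exists>d>1. d ^ Suc m dvd k})"
    by (intro card_mono) auto
  also have "\<dots> \<le> card {k\<in>?I. \<exists>d>m. d^2 dvd k} + card {k\<in>?I. \<exists>d>1. d ^ Suc m dvd k}"
    by (rule card_Un_le)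
  finally have "card ((exponents_in_upto E m - exponents_in E) \<inter> ?I)
      \<le> card {k\<in>?I. \<exists>d>m. d^2 dvd k} + card {k\<in>?I. \<exists>d>1. d ^ Suc m dvd k}" .
  moreover have "real (card {k\<in>?I. \<exists>d>m. d^2 dvd k}) \<le> real N / real m"
    using card_multiples_of_large_power_le[OF assms(2), of 2 N] by simp
  moreover have "real (card {k\<in>?I. \<exists>d>1. d ^ Suc m dvd k}) \<le> real N / 2 ^ (m - 1)"
    using card_multiples_of_large_power_le[of 1 "Suc m" N] assms(2) by simp
  moreover have "real N / 2 ^ (m - 1) \<le> real N / real m"
  proof (rule divide_left_mono)
    have "m \<le> 2 ^ (m - 1)" using less_exp[of "m - 1"] assms(2) by linarith
    then have "real m \<le> real (2 ^ (m - 1))" by (simp only: of_nat_le_iff)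
    then show "real m \<le> 2 ^ (m - 1)" by simp
  qed (use assms(2) in auto)
  ultimately show ?thesis by simp
qed

lemma convergent_density_ratio_exponents_in:
  assumes "1 \<in> E"
  shows "convergent (density_ratio (exponents_in E))"
proof (rule convergent_density_ratio_approx)
  fix e :: real assume "e > 0"
  obtain m :: nat where m: "2 / e < real m" using reals_Archimedean2 by blast
  moreover have "0 < 2 / e" using \<open>e > 0\<close> by simp
  ultimately have "real m > 0" by linarith
  then have "m \<ge> 1" "2 / real m < e"
    using m \<open>e > 0\<close> by (auto simp: divide_less_eq mult.commute)
  let ?T = "exponents_in_upto E m"
  have "has_density ?T (real (card (?T \<inter> {1..fact m ^ Suc m})) / real (fact m ^ Suc m))"
    by (rule periodic_has_density[OF _ exponents_in_upto_periodic]) simp_all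
  then have "convergent (density_ratio ?T)"
    unfolding has_density_iff_density_ratio convergent_def by blast
  moreover have "\<bar>density_ratio (exponents_in E) N - density_ratio ?T N\<bar> \<le> e" for N
  proof -
    have split: "?T \<inter> {1..N} = exponents_in E \<inter> {1..N} \<union> (?T - exponents_in E) \<inter> {1..N}"
      using exponents_in_subset_upto by auto
    have "card (?T \<inter> {1..N}) = card (exponents_in E \<inter> {1..N}) + card ((?T - exponents_in E) \<inter> {1..N})"
      unfolding split by (rule card_Un_disjoint) auto
    then have "\<bar>density_ratio (exponents_in E) N - density_ratio ?T N\<bar>
        = real (card ((?T - exponents_in E) \<inter> {1..N})) / real N"
      by (simp add: density_ratio_def diff_divide_distrib[symmetric])
    also have "\<dots> \<le> 2 / real m"
      using card_exponents_in_upto_diff_le[OF assms \<open>m \<ge> 1\<close>, of N]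
      by (cases "N = 0") (auto simp: divide_le_eq)
    finally show ?thesis using \<open>2 / real m < e\<close> by simp
  qed
  ultimately show "\<exists>T. convergent (density_ratio T) \<and>
      (\<forall>N. \<bar>density_ratio (exponents_in E) N - density_ratio T N\<bar> \<le> e)" by blast
qed

lemma mem_A3_iff: "k \<in> A3 \<longleftrightarrow> k mod 3 \<noteq> 2 \<and> k div 3 \<in> A3"
proof -
  have "(\<forall>i. (k div 3 ^ i) mod 3 \<noteq> 2) \<longleftrightarrow>
      k mod 3 \<noteq> 2 \<and> (\<forall>i. (k div 3 ^ Suc i) mod 3 \<noteq> 2)"
    by (metis not0_implies_Suc power_0 div_by_1)
  then show ?thesis by (simp add: A3_def div_mult2_eq)
qed

lemma one_mem_A3: "1 \<in> A3"
  by (subst mem_A3_iff) (simp add: A3_def)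

lemma two_not_mem_A3: "2 \<notin> A3"
  by (subst mem_A3_iff) simp

lemma card_A3_lessThan_power: "card (A3 \<inter> {..<3 ^ j}) \<le> 2 ^ j"
proof (induction j)
  case 0
  have "A3 \<inter> {..<3 ^ 0} \<subseteq> {0}" by auto
  then show ?case using card_mono[of "{0::nat}"] by fastforce
next
  case (Suc j)
  have "A3 \<inter> {..<3 ^ Suc j} \<subseteq> (\<lambda>(a, b). 3 * a + b) ` ((A3 \<inter> {..<3 ^ j}) \<times> {0, 1})"
  proof
    fix k assume k: "k \<in> A3 \<inter> {..<3 ^ Suc j}"
    then have "k mod 3 \<in> {0, 1}" "k div 3 \<in> A3 \<inter> {..<3 ^ j}"
      by (auto simp: mem_A3_iff[of k] less_mult_imp_div_less)
    then show "k \<in> (\<lambda>(a, b). 3 * a + b) ` ((A3 \<inter> {..<3 ^ j}) \<times> {0, 1})"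
      by (intro image_eqI[of _ _ "(k div 3, k mod 3)"]) auto
  qed
  then have "card (A3 \<inter> {..<3 ^ Suc j})
      \<le> card ((\<lambda>(a, b). 3 * a + b) ` ((A3 \<inter> {..<3 ^ j}) \<times> {0::nat, 1}))"
    by (intro card_mono) auto
  also have "\<dots> \<le> card ((A3 \<inter> {..<3 ^ j}) \<times> {0::nat, 1})" by (rule card_image_le) simp
  also have "\<dots> \<le> 2 ^ Suc j" using Suc.IH by (simp add: card_cartesian_product)
  finally show ?case .
qed

lemma card_A3_atLeastAtMost_le:
  assumes "3 ^ j \<le> N" "N < 3 ^ Suc j"
  shows "real (card (A3 \<inter> {1..N})) \<le> 2 * (2 / 3) ^ j * real N"
proof -
  have "card (A3 \<inter> {1..N}) \<le> card (A3 \<inter> {..<3 ^ Suc j})"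
    using assms(2) by (intro card_mono) auto
  also have "\<dots> \<le> 2 ^ Suc j" by (rule card_A3_lessThan_power)
  finally have "real (card (A3 \<inter> {1..N})) \<le> 2 ^ Suc j"
    by (metis of_nat_le_iff of_nat_numeral of_nat_power)
  also have "\<dots> = 2 * (2 / 3) ^ j * 3 ^ j" by (simp add: power_divide)
  also have "\<dots> \<le> 2 * (2 / 3) ^ j * real N"
    using assms(1) by (intro mult_left_mono) (simp_all flip: of_nat_le_iff)
  finally show ?thesis .
qed

lemma has_density_A3: "has_density A3 0"
  unfolding has_density_iff_density_ratio
proof (rule LIMSEQ_I)
  fix r :: real assume "r > 0"
  obtain J where J: "(2 / 3) ^ J < r / 2"
    using real_arch_pow_inv[of "r / 2" "2 / 3"] \<open>r > 0\<close> by auto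
  have "\<bar>density_ratio A3 N\<bar> < r" if "N \<ge> 3 ^ J" for N
  proof -
    have "N \<ge> 1" using that one_le_power[of "3::nat" J] by linarith
    then obtain j where j: "3 ^ j \<le> N" "N < 3 ^ Suc j" using ex_power_ivl1[of 3 N] by auto
    then have "(3::nat) ^ J < 3 ^ Suc j" using that by linarith
    then have "J \<le> j" using power_less_imp_less_exp[of "3::nat" J "Suc j"] by simp
    have "density_ratio A3 N \<le> 2 * (2 / 3) ^ j"
      using card_A3_atLeastAtMost_le[OF j] \<open>N \<ge> 1\<close> by (simp add: density_ratio_def divide_le_eq)
    also have "\<dots> \<le> 2 * (2 / 3) ^ J" using \<open>J \<le> j\<close> by (simp add: power_decreasing)
    finally show ?thesis using J by (simp add: density_ratio_def)
  qed
  then show "\<exists>N0. \<forall>N\<ge>N0. norm (density_ratio A3 N - 0) < r" by auto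
qed

lemma multiplicity_less_self:
  fixes p k :: nat
  assumes "prime p" "k > 0"
  shows "multiplicity p k < k"
proof -
  have "multiplicity p k < 2 ^ multiplicity p k" by (rule less_exp)
  also have "\<dots> \<le> p ^ multiplicity p k" using prime_ge_2_nat[OF assms(1)] by (rule power_mono) simp
  also have "\<dots> \<le> k" using assms(2) by (intro dvd_imp_le multiplicity_dvd)
  finally show ?thesis .
qed

lemma atLeastAtMost_subset_S: "{1..n} \<subseteq> S (Suc n)"
proof (induction n)
  case (Suc n)
  show ?case
  proof
    fix e assume e: "e \<in> {1..Suc n}"
    have "multiplicity p e \<in> S (Suc n)" if "prime p" "multiplicity p e \<ge> 1" for p
      using multiplicity_less_self[OF that(1), of e] e that(2) Suc.IH by force
    moreover have "S (Suc (Suc n)) = exponents_in (S (Suc n))" by (rule S_Suc) simp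
    ultimately show "e \<in> S (Suc (Suc n))" using e by (simp add: mem_exponents_in_iff)
  qed
qed simp

lemma one_mem_S: "n \<ge> 1 \<Longrightarrow> 1 \<in> S n"
  using one_mem_A3 atLeastAtMost_subset_S[of "n - 1"] by (cases "n - 1") auto

lemma ex_not_mem_S:
  assumes "n \<ge> 1"
  shows "\<exists>e\<ge>1. e \<notin> S n"
  using assms
proof (induction n rule: nat_induct_at_least)
  case base
  show ?case using two_not_mem_A3 by (intro exI[of _ 2]) simp
next
  case (Suc n)
  then obtain e where "e \<ge> 1" "e \<notin> S n" by blast
  then have "2 ^ e \<notin> S (Suc n)"
    unfolding S_Suc[OF Suc.hyps] mem_exponents_in_iff by (auto intro!: exI[of _ 2])
  then show ?case by (intro exI[of _ "2 ^ e"]) simp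
qed

lemma density_ratio_exponents_in_ge:
  assumes "{1..n} \<subseteq> E" "n \<ge> 1" "N \<ge> 1"
  shows "1 - 1 / 2 ^ (n - 1) \<le> density_ratio (exponents_in E) N"
proof -
  let ?I = "{1..N}"
  have "?I - exponents_in E \<subseteq> {k\<in>?I. \<exists>d>1. d ^ Suc n dvd k}"
  proof
    fix k assume k: "k \<in> ?I - exponents_in E"
    then obtain p where p: "prime p" "multiplicity p k \<ge> 1" "multiplicity p k \<notin> E"
      by (auto simp: mem_exponents_in_iff)
    with assms(1) have "Suc n \<le> multiplicity p k" by (meson atLeastAtMost_iff not_less_eq_eq subsetD)
    then have "p ^ Suc n dvd k" by (rule multiplicity_dvd')
    with k prime_gt_1_nat[OF p(1)] show "k \<in> {k\<in>?I. \<exists>d>1. d ^ Suc n dvd k}" by auto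
  qed
  then have "real (card (?I - exponents_in E)) \<le> real (card {k\<in>?I. \<exists>d>1. d ^ Suc n dvd k})"
    by (intro of_nat_mono card_mono) auto
  also have "\<dots> \<le> real N / 2 ^ (n - 1)"
    using card_multiples_of_large_power_le[of 1 "Suc n" N] assms(2) by simp
  finally have "real N - real N / 2 ^ (n - 1) \<le> real (card (exponents_in E \<inter> ?I))"
    using card_Diff_subset_Int[of ?I "exponents_in E"] card_Int_Diff[of ?I "exponents_in E"]
    by (simp add: Int_commute)
  then show ?thesis
    using assms(3) by (simp add: density_ratio_def le_divide_eq algebra_simps)
qed

lemma card_multiples_not_multiples_ge:
  fixes c c' N :: nat
  assumes "0 < c" "0 < c'" "c dvd c'"
  shows "real N / real c - real N / real c' - 1 \<le> real (card {k\<in>{1..N}. c dvd k \<and> \<not> c' dvd k})"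
proof -
  have sub: "{k\<in>{1..N}. c' dvd k} \<subseteq> {k\<in>{1..N}. c dvd k}"
    using assms(3) by (auto intro: dvd_trans)
  have "{k\<in>{1..N}. c dvd k \<and> \<not> c' dvd k} = {k\<in>{1..N}. c dvd k} - {k\<in>{1..N}. c' dvd k}"
    by auto
  then have "card {k\<in>{1..N}. c dvd k \<and> \<not> c' dvd k} = card {k\<in>{1..N}. c dvd k} - card {k\<in>{1..N}. c' dvd k}"
    using card_Diff_subset[OF _ sub] by simp
  also have "\<dots> = N div c - N div c'"
    by (simp only: card_multiples_atLeastAtMost assms(1,2))
  finally have "card {k\<in>{1..N}. c dvd k \<and> \<not> c' dvd k} = N div c - N div c'" .
  moreover have "N div c' \<le> N div c"
    using assms by (simp add: div_le_mono2 dvd_imp_le)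
  moreover have "real N / real c - 1 \<le> real (N div c)"
  proof -
    have "real (N mod c) / real c \<le> 1" using assms(1) by (simp add: divide_le_eq)
    then show ?thesis using of_nat_of_nat_div_aux[of N c, where 'a = real] by linarith
  qed
  moreover have "real (N div c') \<le> real N / real c'" by (rule of_nat_div_le_of_nat)
  ultimately show ?thesis by (simp add: of_nat_diff)
qed

lemma density_ratio_exponents_in_le:
  assumes "e \<ge> 1" "e \<notin> E" "N \<ge> 1"
  shows "density_ratio (exponents_in E) N \<le> 1 - 1 / 2 ^ Suc e + 1 / real N"
proof -
  let ?I = "{1..N}"
  define W where "W = {k\<in>?I. 2 ^ e dvd k \<and> \<not> 2 ^ Suc e dvd k}"
  have "W \<subseteq> ?I - exponents_in E"
  proof
    fix k assume "k \<in> W"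
    then have "k \<in> ?I" "multiplicity 2 k = e"
      by (auto simp: W_def multiplicity_eq_iff_exact_power_dvd simp del: power_Suc)
    with assms(1,2) show "k \<in> ?I - exponents_in E"
      by (auto simp: mem_exponents_in_iff intro!: exI[of _ 2])
  qed
  then have "exponents_in E \<inter> ?I \<subseteq> ?I - W" by auto
  then have "card (exponents_in E \<inter> ?I) \<le> card (?I - W)" by (intro card_mono) auto
  also have "\<dots> = N - card W"
    using \<open>W \<subseteq> ?I - exponents_in E\<close> by (subst card_Diff_subset) (auto intro: finite_subset)
  finally have "real (card (exponents_in E \<inter> ?I)) \<le> real (N - card W)"
    by (simp only: of_nat_le_iff)
  also have "\<dots> = real N - real (card W)"
    using card_mono[of ?I W] \<open>W \<subseteq> ?I - exponents_in E\<close> by (intro of_nat_diff) auto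
  finally have "real (card (exponents_in E \<inter> ?I)) \<le> real N - real (card W)" .
  moreover have "real N / 2 ^ Suc e - 1 \<le> real (card W)"
  proof -
    have "(2::nat) ^ e dvd 2 ^ Suc e" by (rule le_imp_power_dvd) simp
    from card_multiples_not_multiples_ge[OF _ _ this, of N]
    have "real N / real (2 ^ e) - real N / real (2 ^ Suc e) - 1 \<le> real (card W)"
      unfolding W_def by simp
    moreover have "real N / real (2 ^ e) - real N / real (2 ^ Suc e) = real N / 2 ^ Suc e"
      by (simp add: field_simps)
    ultimately show ?thesis by linarith
  qed
  ultimately have "real (card (exponents_in E \<inter> ?I)) \<le> real N - real N / 2 ^ Suc e + 1"
    by linarith
  then have "density_ratio (exponents_in E) N \<le> (real N - real N / 2 ^ Suc e + 1) / real N"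
    unfolding density_ratio_def by (rule divide_right_mono) simp
  also have "\<dots> = 1 - 1 / 2 ^ Suc e + 1 / real N"
    using assms(3) by (simp add: field_simps)
  finally show ?thesis .
qed

lemma has_density_le_1: "has_density A d \<Longrightarrow> d \<le> 1"
  unfolding has_density_iff_density_ratio
  by (rule LIMSEQ_le_const2) (auto intro: density_ratio_le_1)

lemma convergent_density_ratio_S:
  assumes "n \<ge> 1"
  shows "convergent (density_ratio (S n))"
proof (cases "n = 1")
  case True
  then show ?thesis using has_density_A3 by (auto simp: has_density_iff_density_ratio convergent_def)
next
  case False
  then obtain m where m: "n = Suc m" "m \<ge> 1" using assms by (cases n) auto
  then show ?thesis
    using S_Suc[OF m(2)] convergent_density_ratio_exponents_in[OF one_mem_S[OF m(2)]] by simp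
qed

lemma density_S_ge:
  assumes "has_density (S (n + 3)) d"
  shows "1 - (1 / 2) ^ n \<le> d"
proof (rule LIMSEQ_le_const)
  show "density_ratio (S (n + 3)) \<longlonglongrightarrow> d"
    using assms by (simp add: has_density_iff_density_ratio)
  have S: "S (n + 3) = exponents_in (S (Suc (Suc n)))"
    by (simp add: numeral_3_eq_3 S_Suc del: S.simps)
  have "1 - (1 / 2) ^ n \<le> density_ratio (S (n + 3)) N" if "N \<ge> 1" for N
    using density_ratio_exponents_in_ge[OF atLeastAtMost_subset_S[of "Suc n"] _ that]
    unfolding S by (simp add: power_one_over)
  then show "\<exists>N0. \<forall>N\<ge>N0. 1 - (1 / 2) ^ n \<le> density_ratio (S (n + 3)) N" by blast
qed

lemma density_S_less_1:
  assumes "n \<ge> 1" "has_density (S n) d"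
  shows "d < 1"
proof (cases "n = 1")
  case True
  then have "d = 0"
    using assms(2) has_density_A3 by (auto simp: has_density_iff_density_ratio intro: LIMSEQ_unique)
  then show ?thesis by simp
next
  case False
  then obtain m where m: "n = Suc m" "m \<ge> 1" using assms(1) by (cases n) auto
  obtain e where e: "e \<ge> 1" "e \<notin> S m" using ex_not_mem_S[OF m(2)] by blast
  have "(\<lambda>N. 1 - 1 / 2 ^ Suc e + 1 / real N) \<longlonglongrightarrow> 1 - 1 / 2 ^ Suc e + 0"
    by (intro tendsto_intros lim_const_over_n)
  moreover have "density_ratio (S n) N \<le> 1 - 1 / 2 ^ Suc e + 1 / real N" if "N \<ge> 1" for N
    using density_ratio_exponents_in_le[OF e that] S_Suc[OF m(2)] m(1) by simp
  ultimately have "d \<le> 1 - 1 / 2 ^ Suc e + 0"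
    using assms(2) unfolding has_density_iff_density_ratio by (intro LIMSEQ_le) blast+
  moreover have "(0::real) < 1 / 2 ^ Suc e" by simp
  ultimately show ?thesis by linarith
qed

theorem mainTheorem8:
  shows "\<exists>\<delta> :: nat \<Rightarrow> real.
           (\<forall>n\<ge>1. has_density (S n) (\<delta> n)) \<and>
           \<delta> \<longlonglongrightarrow> 1 \<and>
           (\<forall>n\<ge>1. \<delta> n \<noteq> 1)"
proof -
  define \<delta> where "\<delta> n = lim (density_ratio (S n))" for n
  have density: "has_density (S n) (\<delta> n)" if "n \<ge> 1" for n
    using convergent_density_ratio_S[OF that]
    unfolding \<delta>_def has_density_iff_density_ratio by (simp add: convergent_LIMSEQ_iff)
  have "(\<lambda>n. \<delta> (n + 3)) \<longlonglongrightarrow> 1"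
  proof (rule tendsto_sandwich)
    show "\<forall>\<^sub>F n in sequentially. 1 - (1 / 2) ^ n \<le> \<delta> (n + 3)"
      by (intro always_eventually allI density_S_ge density) simp
    show "\<forall>\<^sub>F n in sequentially. \<delta> (n + 3) \<le> 1"
      by (intro always_eventually allI has_density_le_1[OF density]) simp
    show "(\<lambda>n. 1 - (1 / 2) ^ n :: real) \<longlonglongrightarrow> 1"
      using tendsto_diff[OF tendsto_const LIMSEQ_realpow_zero[of "1 / 2 :: real"]] by simp
  qed simp
  then have "\<delta> \<longlonglongrightarrow> 1" by (rule LIMSEQ_offset)
  moreover have "\<delta> n \<noteq> 1" if "n \<ge> 1" for n
    using density_S_less_1[OF that density[OF that]] by simp
  ultimately show ?thesis using density by blast
qed

end
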